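(* Let $\Lambda_i\in\mathcal H_I$, $i\in[n]$, $\mathbb P$ atomless, and $Y\ge0$ a random variable with $1<\mathbb E^{\mathbb P}(Y)<\infty$. If $\overline\Lambda^*$ is attainable, then for all $X\in\mathcal X$ $$\mathop{\square}_{i=1}^n\sup_{\mathbb Q\in\mathcal P(\mathbb P,0,Y)}\Lambda_i\mathrm{VaR}^{\mathbb Q}(X)=\inf\{x\in\mathbb R:\mathbb E^{\mathbb P}(Y\mathds 1_{\{X>x\}})\le\overline\Lambda^*(x)\}.$$ If moreover the right-hand side equals a finite value $x^*$ and $\overline\Lambda^*$ is right-continuous at $x^*$, then an optimal allocation is $X_i=(X-x^* )\mathds 1_{A_i^*}+y_i^*$, where $(y_1^*,\dots,y_n^* )$ satisfies $\sum_iy_i^*=x^*$ and $\sum_i\Lambda_i(y_i^* )=\overline\Lambda^*(x^* )$, and $(A_1^*,\dots,A_n^* )\in\Pi_n(\Omega)$ satisfies $\mathbb E^{\mathbb P}(Y\mathds 1_{\{X>x^*\}\cap A_i^*})\le\Lambda_i(y_i^* )$ for all $i$ (such objects exist).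
   Context: $\Lambda\mathrm{VaR}^{\mathbb Q}(X)=\inf\{x\in\mathbb R:\mathbb Q(X>x)\le\Lambda(x)\}$; $\mathcal H_I$: increasing functions $\mathbb R\to(0,1)$. $\mathcal P(\mathbb P,0,Y)=\{\mathbb Q\ll\mathbb P: 0\le\mathrm d\mathbb Q/\mathrm d\mathbb P\le Y\}$. $\overline\Lambda^*(x)=\sup_{y_1+\dots+y_n=x}\sum_{i=1}^n\Lambda_i(y_i)$; it is attainable if for each $x\in\mathbb R$ the supremum is attained by some $(y_1,\dots,y_n)$ with $\sum_iy_i=x$. Inf-convolution $\mathop{\square}_i\rho_i(X)=\inf\{\sum_i\rho_i(X_i):X_i\in\mathcal X,\sum_iX_i=X\}$, $\mathcal X$ a set of real-valued random variables containing constants, closed under sums, differences, multiplication by indicators. $\Pi_n(\Omega)$: measurable partitions into $n$ sets. *)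

theory Defs
  imports "HOL-Probability.Probability"
begin

definition atomless :: "'a measure \<Rightarrow> bool" where
  "atomless M \<longleftrightarrow> (\<forall>A\<in>sets M. 0 < measure M A \<longrightarrow>
     (\<exists>B\<in>sets M. B \<subseteq> A \<and> 0 < measure M B \<and> measure M B < measure M A))"

definition H_I :: "(real \<Rightarrow> real) \<Rightarrow> bool" where
  "H_I L \<longleftrightarrow> mono L \<and> (\<forall>x. 0 < L x \<and> L x < 1)"

definition LVaR :: "(real \<Rightarrow> real) \<Rightarrow> 'a measure \<Rightarrow> ('a \<Rightarrow> real) \<Rightarrow> ereal" where
  "LVaR L Q X = Inf {ereal x | x. measure Q {\<omega> \<in> space Q. X \<omega> > x} \<le> L x}"

definition Pset :: "'a measure \<Rightarrow> ('a \<Rightarrow> real) \<Rightarrow> 'a measure set" where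
  "Pset M Y = {Q. \<exists>f\<in>borel_measurable M. (AE \<omega> in M. 0 \<le> f \<omega> \<and> f \<omega> \<le> Y \<omega>)
      \<and> Q = density M (\<lambda>\<omega>. ennreal (f \<omega>)) \<and> prob_space Q}"

definition robustLVaR :: "'a measure \<Rightarrow> ('a \<Rightarrow> real) \<Rightarrow> (real \<Rightarrow> real) \<Rightarrow> ('a \<Rightarrow> real) \<Rightarrow> ereal" where
  "robustLVaR M Y L X = (SUP Q\<in>Pset M Y. LVaR L Q X)"

definition infconv :: "'a measure \<Rightarrow> ('a \<Rightarrow> real) set \<Rightarrow> nat \<Rightarrow> (nat \<Rightarrow> ('a \<Rightarrow> real) \<Rightarrow> ereal)
    \<Rightarrow> ('a \<Rightarrow> real) \<Rightarrow> ereal" where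
  "infconv M XX n \<rho> X = Inf {(\<Sum>i<n. \<rho> i (Z i)) | Z.
      (\<forall>i<n. Z i \<in> XX) \<and> (\<forall>\<omega>\<in>space M. (\<Sum>i<n. Z i \<omega>) = X \<omega>)}"

definition Lbar :: "nat \<Rightarrow> (nat \<Rightarrow> real \<Rightarrow> real) \<Rightarrow> real \<Rightarrow> real" where
  "Lbar n L x = Sup {(\<Sum>i<n. L i (y i)) | y. (\<Sum>i<n. y i) = x}"

definition attainable :: "nat \<Rightarrow> (nat \<Rightarrow> real \<Rightarrow> real) \<Rightarrow> bool" where
  "attainable n L \<longleftrightarrow> (\<forall>x. \<exists>y. (\<Sum>i<n. y i) = x \<and> (\<Sum>i<n. L i (y i)) = Lbar n L x)"

end

theory Submission
  imports Defs
begin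

text \<open>
  Every admissible scenario Q has Q(B) \<le> E[Y 1_B], and rescaling Y separately on an event S
  and off it yields an admissible Q with Q(S) = min 1 E[Y 1_S] (this uses E Y > 1). Hence the
  robust \<Lambda>-VaR of Z is the smallest x with E[Y 1_{Z > x}] \<le> \<Lambda>(x).
  If Z_1 + ... + Z_n = X and each y_i is admissible for Z_i, then {X > y_1 + ... + y_n} is
  covered by the events {Z_i > y_i}, which gives the lower bound. Conversely, if
  E[Y 1_{X > x}] \<le> \<Lambda>*(x) = \<Lambda>_1(y_1) + ... + \<Lambda>_n(y_n), then, the measure
  B \<mapsto> E[Y 1_B] being atomless, {X > x} splits into pieces A_i of weight at most
  \<Lambda>_i(y_i), and the allocation (X - x) 1_{A_i} + y_i has total risk at most x.
  Right-continuity of x \<mapsto> E[Y 1_{X > x}] and of \<Lambda>* makes the infimum x* attained.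
\<close>

context finite_measure
begin

lemma measure_pos_iff_not_null:
  assumes "A \<in> sets M"
  shows "0 < measure M A \<longleftrightarrow> A \<notin> null_sets M"
  using assms by (simp add: null_sets_def emeasure_eq_measure zero_less_measure_iff)

lemma atomless_small_subset:
  assumes atomless: "atomless M" and A: "A \<in> sets M" "0 < measure M A" and e: "0 < e"
  shows "\<exists>B\<in>sets M. B \<subseteq> A \<and> 0 < measure M B \<and> measure M B < e"
proof -
  have halving: "\<exists>B\<in>sets M. B \<subseteq> A \<and> 0 < measure M B \<and> measure M B \<le> measure M A / 2 ^ k" for k
  proof (induction k)
    case 0
    then show ?case using A by auto
  next
    case (Suc k)
    then obtain B where B: "B \<in> sets M" "B \<subseteq> A" "0 < measure M B" "measure M B \<le> measure M A / 2 ^ k"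
      by blast
    with atomless obtain C where C: "C \<in> sets M" "C \<subseteq> B" "0 < measure M C" "measure M C < measure M B"
      unfolding atomless_def by blast
    have diff: "measure M (B - C) = measure M B - measure M C"
      using finite_measure_Diff C B by blast
    have half: "measure M B / 2 \<le> measure M A / 2 ^ Suc k"
      using B(4) by (simp add: divide_right_mono)
    show ?case
    proof (cases "measure M C \<le> measure M B / 2")
      case True
      then show ?thesis using B C half by (intro bexI[of _ C]) auto
    next
      case False
      then show ?thesis using B C diff half by (intro bexI[of _ "B - C"]) auto
    qed
  qed
  obtain k where "measure M A / e < 2 ^ k"
    using real_arch_pow[of 2 "measure M A / e"] by auto
  then have "measure M A / 2 ^ k < e"
    using e by (simp add: divide_less_eq mult.commute)
  moreover obtain B where "B \<in> sets M" "B \<subseteq> A" "0 < measure M B" "measure M B \<le> measure M A / 2 ^ k"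
    using halving by blast
  ultimately show ?thesis by (intro bexI[of _ B]) auto
qed

lemma exists_half_max_measure:
  assumes "F \<subseteq> sets M" and "{} \<in> F"
  shows "\<exists>C\<in>F. \<forall>D\<in>F. measure M D \<le> 2 * measure M C"
proof -
  let ?S = "measure M ` F"
  have "bdd_above ?S"
    using assms(1) by (intro bdd_aboveI[of _ "measure M (space M)"]) (auto intro: bounded_measure)
  then have upper: "measure M D \<le> Sup ?S" if "D \<in> F" for D
    using that by (intro cSup_upper) auto
  show ?thesis
  proof (cases "Sup ?S = 0")
    case True
    then show ?thesis using assms(2) upper by (intro bexI[of _ "{}"]) auto
  next
    case False
    then have "Sup ?S / 2 < Sup ?S" using upper[OF assms(2)] by simp
    then obtain C where "C \<in> F" "Sup ?S / 2 < measure M C"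
      using less_cSupD[of ?S] assms(2) by blast
    then show ?thesis using upper by (intro bexI[of _ C]) force+
  qed
qed

lemma exists_saturated_subset:
  assumes A: "A \<in> sets M" and t: "0 \<le> t"
  shows "\<exists>B\<in>sets M. B \<subseteq> A \<and> measure M B \<le> t \<and>
    (\<forall>D\<in>sets M. D \<subseteq> A - B \<and> measure M D \<le> t - measure M B \<longrightarrow> measure M D = 0)"
proof -
  define F where "F B = {C \<in> sets M. C \<subseteq> A - B \<and> measure M C \<le> t - measure M B}" for B
  have "\<exists>C\<in>F B. \<forall>D\<in>F B. measure M D \<le> 2 * measure M C"
    if "B \<in> sets M" "measure M B \<le> t" for B
    using that by (intro exists_half_max_measure) (auto simp: F_def)
  then obtain grow where grow: "\<And>B. B \<in> sets M \<Longrightarrow> measure M B \<le> t \<Longrightarrow>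
      grow B \<in> F B \<and> (\<forall>D\<in>F B. measure M D \<le> 2 * measure M (grow B))"
    by metis
  define Bs where "Bs = rec_nat {} (\<lambda>_ B. B \<union> grow B)"
  have Bs_simps: "Bs 0 = {}" "Bs (Suc k) = Bs k \<union> grow (Bs k)" for k
    by (simp_all add: Bs_def)
  have step: "grow (Bs k) \<in> F (Bs k) \<and> Bs k \<in> sets M \<and> Bs k \<subseteq> A \<and> measure M (Bs k) \<le> t \<and>
      measure M (Bs (Suc k)) = measure M (Bs k) + measure M (grow (Bs k))" for k
  proof (induction k)
    case 0
    then show ?case using grow[of "{}"] t by (auto simp: Bs_simps F_def)
  next
    case (Suc k)
    then have Bs: "Bs (Suc k) \<in> sets M" "Bs (Suc k) \<subseteq> A" "measure M (Bs (Suc k)) \<le> t"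
      by (auto simp: Bs_simps F_def)
    then have "grow (Bs (Suc k)) \<in> F (Bs (Suc k))" using grow by blast
    with Bs show ?case
      by (auto simp: F_def Bs_simps(2)[of "Suc k"] intro!: finite_measure_Union)
  qed
  define B where "B = (\<Union>k. Bs k)"
  have "incseq Bs" by (rule incseq_SucI) (simp add: Bs_simps)
  then have lim: "(\<lambda>k. measure M (Bs k)) \<longlonglongrightarrow> measure M B"
    unfolding B_def using step by (intro finite_Lim_measure_incseq) auto
  have "(\<lambda>k. measure M (Bs (Suc k)) - measure M (Bs k)) \<longlonglongrightarrow> measure M B - measure M B"
    by (intro tendsto_diff LIMSEQ_Suc lim)
  then have grow_vanishes: "(\<lambda>k. measure M (grow (Bs k))) \<longlonglongrightarrow> 0"
    using step by simp
  have "measure M D = 0" if D: "D \<in> sets M" "D \<subseteq> A - B" "measure M D \<le> t - measure M B" for D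
  proof -
    \<comment> \<open>D stays a candidate at every stage, so each greedy step has measure at least half of D's\<close>
    have "D \<in> F (Bs k)" for k
    proof -
      have "measure M (Bs k) \<le> measure M B"
        using step by (intro finite_measure_mono) (auto simp: B_def)
      then show ?thesis using D by (auto simp: F_def B_def)
    qed
    then have "measure M D / 2 \<le> measure M (grow (Bs k))" for k
      using grow step by (fastforce simp: field_simps)
    then have "measure M D / 2 \<le> 0" by (intro LIMSEQ_le_const[OF grow_vanishes]) auto
    then show ?thesis by (simp add: measure_le_0_iff)
  qed
  moreover have "B \<in> sets M" "B \<subseteq> A" using step by (auto simp: B_def)
  moreover have "measure M B \<le> t" using step by (intro LIMSEQ_le_const2[OF lim]) auto
  ultimately show ?thesis by blast
qed

lemma atomless_intermediate_value:
  assumes atomless: "atomless M" and A: "A \<in> sets M" and t: "0 \<le> t" "t \<le> measure M A"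
  shows "\<exists>B\<in>sets M. B \<subseteq> A \<and> measure M B = t"
proof -
  obtain B where B: "B \<in> sets M" "B \<subseteq> A" "measure M B \<le> t"
    and saturated: "\<And>D. D \<in> sets M \<Longrightarrow> D \<subseteq> A - B \<Longrightarrow> measure M D \<le> t - measure M B \<Longrightarrow> measure M D = 0"
    using exists_saturated_subset[OF A t(1)] by blast
  have "measure M B = t"
  proof (rule ccontr)
    assume "measure M B \<noteq> t"
    with B have "measure M B < t" by simp
    moreover have "0 < measure M (A - B)"
      using finite_measure_Diff[OF A B(1,2)] \<open>measure M B < t\<close> t by simp
    ultimately obtain D where "D \<in> sets M" "D \<subseteq> A - B" "0 < measure M D" "measure M D < t - measure M B"
      using atomless_small_subset[OF atomless, of "A - B" "t - measure M B"] A B by auto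
    with saturated show False by force
  qed
  with B show ?thesis by blast
qed

lemma atomless_partition:
  fixes n :: nat
  assumes atomless: "atomless M" and "0 < n" and "S \<in> sets M"
    and "\<forall>i<n. 0 \<le> t i" and "measure M S \<le> (\<Sum>i<n. t i)"
  shows "\<exists>A. (\<forall>i<n. A i \<in> sets M \<and> A i \<subseteq> S \<and> measure M (A i) \<le> t i)
           \<and> disjoint_family_on A {..<n} \<and> (\<Union>i<n. A i) = S"
  using assms(2-)
proof (induction n arbitrary: S rule: nat_induct_non_zero)
  case 1
  then show ?case by (intro exI[of _ "\<lambda>_. S"]) (auto simp: disjoint_family_on_def)
next
  case (Suc n)
  obtain B where B: "B \<in> sets M" "B \<subseteq> S" "measure M B = min (t n) (measure M S)"
    using atomless_intermediate_value[OF atomless \<open>S \<in> sets M\<close>, of "min (t n) (measure M S)"] Suc.prems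
    by auto
  have "0 \<le> (\<Sum>i<n. t i)" using Suc.prems by (intro sum_nonneg) auto
  then have "measure M (S - B) \<le> (\<Sum>i<n. t i)"
    using finite_measure_Diff[OF \<open>S \<in> sets M\<close> B(1,2)] B(3) Suc.prems by (auto simp: min_def)
  then obtain A where A: "\<forall>i<n. A i \<in> sets M \<and> A i \<subseteq> S - B \<and> measure M (A i) \<le> t i"
      "disjoint_family_on A {..<n}" "(\<Union>i<n. A i) = S - B"
    using Suc.IH[of "S - B"] Suc.prems B by auto
  show ?case
  proof (intro exI[of _ "A(n := B)"] conjI)
    show "\<forall>i<Suc n. (A(n := B)) i \<in> sets M \<and> (A(n := B)) i \<subseteq> S \<and> measure M ((A(n := B)) i) \<le> t i"
      using A(1) B by (auto simp: less_Suc_eq)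
    have "(\<Union>i<n. (A(n := B)) i) = S - B" "disjoint_family_on (A(n := B)) {..<n}"
      using A(2,3) by (simp_all add: disjoint_family_on_def)
    then show "disjoint_family_on (A(n := B)) {..<Suc n}" "(\<Union>i<Suc n. (A(n := B)) i) = S"
      using B(2) by (auto simp: lessThan_Suc disjoint_family_on_insert)
  qed
qed

end

lemma emeasure_density_eq_integral:
  fixes f :: "'a \<Rightarrow> real"
  assumes [measurable]: "f \<in> borel_measurable M" and "\<forall>x\<in>space M. 0 \<le> f x" and "integrable M f"
    and [measurable]: "B \<in> sets M"
  shows "emeasure (density M (\<lambda>x. ennreal (f x))) B = ennreal (integral\<^sup>L M (\<lambda>x. f x * indicator B x))"
proof -
  have "emeasure (density M (\<lambda>x. ennreal (f x))) B = (\<integral>\<^sup>+ x. ennreal (f x) * indicator B x \<partial>M)"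
    by (rule emeasure_density) auto
  also have "\<dots> = (\<integral>\<^sup>+ x. ennreal (f x * indicator B x) \<partial>M)"
    by (intro nn_integral_cong) (auto split: split_indicator)
  also have "\<dots> = ennreal (integral\<^sup>L M (\<lambda>x. f x * indicator B x))"
    using assms by (intro nn_integral_eq_integral integrable_real_mult_indicator AE_I2)
      (auto split: split_indicator)
  finally show ?thesis .
qed

lemma
  fixes f :: "'a \<Rightarrow> real"
  assumes "f \<in> borel_measurable M" and "\<forall>x\<in>space M. 0 \<le> f x" and "integrable M f"
  shows finite_measure_density_integrable: "finite_measure (density M (\<lambda>x. ennreal (f x)))"
    and measure_density_eq_integral:
      "B \<in> sets M \<Longrightarrow> measure (density M (\<lambda>x. ennreal (f x))) B = integral\<^sup>L M (\<lambda>x. f x * indicator B x)"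
proof -
  show "finite_measure (density M (\<lambda>x. ennreal (f x)))"
    by (rule finite_measureI) (simp add: emeasure_density_eq_integral[OF assms])
  assume "B \<in> sets M"
  moreover have "0 \<le> integral\<^sup>L M (\<lambda>x. f x * indicator B x)"
    using assms by (intro integral_nonneg_AE AE_I2) (auto split: split_indicator)
  ultimately show "measure (density M (\<lambda>x. ennreal (f x))) B = integral\<^sup>L M (\<lambda>x. f x * indicator B x)"
    by (simp add: measure_def emeasure_density_eq_integral[OF assms])
qed

lemma null_sets_density_iff_null_sets:
  fixes f :: "'a \<Rightarrow> real"
  assumes "f \<in> borel_measurable M" and "C \<in> sets M" and "\<forall>x\<in>C. 0 < f x"
  shows "C \<in> null_sets (density M (\<lambda>x. ennreal (f x))) \<longleftrightarrow> C \<in> null_sets M"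
proof -
  have "(AE x in M. x \<in> C \<longrightarrow> ennreal (f x) = 0) \<longleftrightarrow> (AE x in M. x \<notin> C)"
    using assms(3) by (intro AE_cong) auto
  then show ?thesis using assms by (simp add: null_sets_density_iff AE_iff_null_sets[of C M])
qed

lemma atomless_density:
  fixes f :: "'a \<Rightarrow> real"
  assumes "finite_measure M" and atomless: "atomless M"
    and [measurable]: "f \<in> borel_measurable M" and "\<forall>x\<in>space M. 0 \<le> f x" and "integrable M f"
  shows "atomless (density M (\<lambda>x. ennreal (f x)))"
  unfolding atomless_def
proof (intro ballI impI)
  let ?N = "density M (\<lambda>x. ennreal (f x))"
  interpret finite_measure M by fact
  interpret N: finite_measure ?N
    by (rule finite_measure_density_integrable[OF assms(3-)])
  have pos_iff: "0 < measure ?N C \<longleftrightarrow> 0 < measure M C" if "C \<in> sets M" "\<forall>x\<in>C. 0 < f x" for C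
    using that null_sets_density_iff_null_sets[of f M C]
    by (simp add: N.measure_pos_iff_not_null measure_pos_iff_not_null)
  fix A assume A: "A \<in> sets ?N" "0 < measure ?N A"
  define A' where "A' = A \<inter> {x \<in> space M. 0 < f x}"
  have A': "A' \<in> sets M" "\<forall>x\<in>A'. 0 < f x" "A' \<subseteq> A"
    using A by (auto simp: A'_def)
  have "A - A' \<in> null_sets ?N"
    using A assms(4) by (auto simp: null_sets_density_iff A'_def intro!: AE_I2)
  then have "measure ?N A' = measure ?N A"
    using measure_Diff_null_set[of A ?N "A - A'"] A A' by (simp add: Diff_Diff_Int Int_absorb1)
  with A(2) A' have "0 < measure M A'" using pos_iff[of A'] by simp
  with atomless A' obtain C where C: "C \<in> sets M" "C \<subseteq> A'" "0 < measure M C" "measure M C < measure M A'"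
    unfolding atomless_def by blast
  have "0 < measure M (A' - C)"
    using finite_measure_Diff[OF A'(1) C(1,2)] C(4) by simp
  with C A' have pos: "0 < measure ?N C" "0 < measure ?N (A' - C)"
    using pos_iff[of C] pos_iff[of "A' - C"] by auto
  have "measure ?N (A' - C) = measure ?N A' - measure ?N C"
    using C A' by (intro N.finite_measure_Diff) auto
  with pos \<open>measure ?N A' = measure ?N A\<close> have "measure ?N C < measure ?N A" by simp
  with C A' pos show "\<exists>B\<in>sets ?N. B \<subseteq> A \<and> 0 < measure ?N B \<and> measure ?N B < measure ?N A"
    by (intro bexI[of _ C]) auto
qed

lemma Lbar_upper:
  assumes L: "\<forall>i<n. H_I (L i)" and "(\<Sum>i<n. y i) = x"
  shows "(\<Sum>i<n. L i (y i)) \<le> Lbar n L x"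
  unfolding Lbar_def
proof (rule cSup_upper)
  have "(\<Sum>i<n. L i (y i)) \<le> real n" for y
    using sum_bounded_above[of "{..<n}" "\<lambda>i. L i (y i)" 1] L by (auto simp: H_I_def less_imp_le)
  then show "bdd_above {\<Sum>i<n. L i (y i) | y. (\<Sum>i<n. y i) = x}"
    by (intro bdd_aboveI[of _ "real n"]) auto
qed (use assms(2) in blast)

lemma Lbar_mono:
  assumes L: "\<forall>i<n. H_I (L i)" and "0 < n" and "x' \<le> x"
  shows "Lbar n L x' \<le> Lbar n L x"
  unfolding Lbar_def[of n L x']
proof (rule cSup_least)
  have "(\<Sum>i<n. if i = 0 then x' else 0) = x'" using \<open>0 < n\<close> by simp
  then show "{\<Sum>i<n. L i (y i) | y. (\<Sum>i<n. y i) = x'} \<noteq> {}" by blast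
next
  fix v assume "v \<in> {\<Sum>i<n. L i (y i) | y. (\<Sum>i<n. y i) = x'}"
  then obtain y where y: "(\<Sum>i<n. y i) = x'" "v = (\<Sum>i<n. L i (y i))" by blast
  define y' where "y' i = y i + (if i = 0 then x - x' else 0)" for i
  have "(\<Sum>i<n. y' i) = x"
    using y(1) \<open>0 < n\<close> by (simp add: y'_def sum.distrib)
  moreover have "L i (y i) \<le> L i (y' i)" if "i < n" for i
  proof (rule monoD[of "L i"])
    show "mono (L i)" using L that by (simp add: H_I_def)
    show "y i \<le> y' i" using \<open>x' \<le> x\<close> by (simp add: y'_def)
  qed
  ultimately show "v \<le> Lbar n L x"
    using Lbar_upper[OF L] y(2) by (metis (no_types, lifting) order_trans sum_mono lessThan_iff)
qed

lemma ereal_le_sum_Inf: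
  fixes c :: ereal and n :: nat
  assumes "\<And>x. \<forall>i<n. P i (x i) \<Longrightarrow> c \<le> ereal (\<Sum>i<n. x i)"
  shows "c \<le> (\<Sum>i<n. Inf {ereal y | y. P i y})"
  using assms
proof (induction n arbitrary: c)
  case 0
  then show ?case by (simp add: zero_ereal_def)
next
  case (Suc n)
  define A where "A = (\<Sum>i<n. Inf {ereal y | y. P i y})"
  define I where "I = Inf {ereal y | y. P n y}"
  have shifted: "c \<le> A + ereal y" if "P n y" for y
  proof -
    have "c - ereal y \<le> A" unfolding A_def
    proof (rule Suc.IH)
      fix x assume "\<forall>i<n. P i (x i)"
      with that have "c \<le> ereal (\<Sum>i<Suc n. (x(n := y)) i)"
        by (intro Suc.prems) (auto simp: less_Suc_eq)
      then show "c - ereal y \<le> ereal (\<Sum>i<n. x i)" by (cases c) auto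
    qed
    then show ?thesis by (cases c; cases A) auto
  qed
  have "c \<le> A + I"
  proof (cases A)
    case (real a)
    have "c - ereal a \<le> I"
      unfolding I_def using shifted real by (intro Inf_greatest) (force simp: ereal_minus_le_iff add.commute)
    then show ?thesis using real by (cases c; cases I) auto
  next
    case MInf
    \<comment> \<open>in ereal, \<infinity> absorbs -\<infinity>, so an empty constraint set for agent n makes the bound trivial\<close>
    then show ?thesis
    proof (cases "\<exists>y. P n y")
      case False
      then have "I = \<infinity>" by (simp add: I_def top_ereal_def[symmetric])
      then show ?thesis by simp
    qed (use shifted in auto)
  qed simp
  then show ?case by (simp add: A_def I_def)
qed

lemma le_at_Inf_right_continuous:
  fixes f g :: "real \<Rightarrow> real"
  assumes "antimono f" "mono g" "continuous (at_right a) f" "continuous (at_right a) g"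
    and Inf: "Inf {ereal x | x. f x \<le> g x} = ereal a"
  shows "f a \<le> g a"
proof (rule tendsto_le[OF trivial_limit_at_right_real])
  show "(f \<longlongrightarrow> f a) (at_right a)" "(g \<longlongrightarrow> g a) (at_right a)"
    using assms(3,4) by (simp_all add: continuous_within)
  have le: "f x \<le> g x" if "a < x" for x
  proof -
    have "Inf {ereal x | x. f x \<le> g x} < ereal x" using Inf that by simp
    then obtain x' where x': "f x' \<le> g x'" "x' < x"
      unfolding Inf_less_iff by auto
    have "f x \<le> f x'" using assms(1) x'(2) by (simp add: antimonoD)
    also have "\<dots> \<le> g x'" by (fact x'(1))
    also have "\<dots> \<le> g x" using assms(2) x'(2) by (simp add: monoD)
    finally show ?thesis .
  qed
  show "\<forall>\<^sub>F x in at_right a. f x \<le> g x"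
    by (rule eventually_mono[OF eventually_at_right_less le])
qed

lemma LVaR_ge:
  assumes "finite_measure Q" and [measurable]: "Z \<in> borel_measurable Q" and "mono L"
    and "L x < measure Q {\<omega> \<in> space Q. x < Z \<omega>}"
  shows "ereal x \<le> LVaR L Q Z"
  unfolding LVaR_def
proof (rule Inf_greatest, safe)
  fix x' assume x': "measure Q {\<omega> \<in> space Q. x' < Z \<omega>} \<le> L x'"
  show "ereal x \<le> ereal x'"
  proof (rule ccontr)
    assume "\<not> ereal x \<le> ereal x'"
    then have "x' < x" by simp
    then have "measure Q {\<omega> \<in> space Q. x < Z \<omega>} \<le> measure Q {\<omega> \<in> space Q. x' < Z \<omega>}"
      using assms(1) by (intro finite_measure.finite_measure_mono) auto
    also have "\<dots> \<le> L x'" by (rule x')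
    also have "\<dots> \<le> L x" using \<open>mono L\<close> \<open>x' < x\<close> by (simp add: monoD)
    finally show False using assms(4) by simp
  qed
qed

lemma sum_shifted_indicator_partition:
  fixes X :: "'a \<Rightarrow> real" and n :: nat
  assumes "disjoint_family_on A {..<n}" "\<omega> \<in> (\<Union>i<n. A i)" "(\<Sum>i<n. y i) = x"
  shows "(\<Sum>i<n. (X \<omega> - x) * indicator (A i) \<omega> + y i) = X \<omega>"
proof -
  obtain j where "j < n" "\<omega> \<in> A j" using assms(2) by blast
  then have "(\<Sum>i<n. (X \<omega> - x) * indicator (A i) \<omega>) = X \<omega> - x"
    by (intro sum_indicator_disjoint_family[where f = "\<lambda>_. X \<omega> - x", OF assms(1)]) auto
  then show ?thesis using assms(3) unfolding sum.distrib by linarith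
qed

locale bounded_density_family = prob_space M for M :: "'a measure" +
  fixes Y :: "'a \<Rightarrow> real"
  assumes Y_measurable[measurable]: "Y \<in> borel_measurable M"
    and Y_nonneg: "\<forall>\<omega>\<in>space M. 0 \<le> Y \<omega>"
    and Y_integrable: "integrable M Y"
    and expectation_Y_gt_1: "1 < expectation Y"
begin

abbreviation tail :: "('a \<Rightarrow> real) \<Rightarrow> real \<Rightarrow> real" where
  "tail X x \<equiv> integral\<^sup>L M (\<lambda>\<omega>. Y \<omega> * indicator {\<omega> \<in> space M. x < X \<omega>} \<omega>)"

abbreviation weighted :: "'a measure" where
  "weighted \<equiv> density M (\<lambda>\<omega>. ennreal (Y \<omega>))"

lemma finite_measure_weighted: "finite_measure weighted"
  using Y_nonneg Y_integrable by (intro finite_measure_density_integrable) auto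

lemma measure_weighted: "B \<in> sets M \<Longrightarrow> measure weighted B = integral\<^sup>L M (\<lambda>\<omega>. Y \<omega> * indicator B \<omega>)"
  using Y_nonneg Y_integrable by (intro measure_density_eq_integral) auto

lemma atomless_weighted: "atomless M \<Longrightarrow> atomless weighted"
  using Y_nonneg Y_integrable by (intro atomless_density) (auto simp: finite_measure_axioms)

lemma finite_borel_measure_distr_weighted:
  "X \<in> borel_measurable M \<Longrightarrow> finite_borel_measure (distr weighted borel X)"
  by (intro finite_borel_measure.intro finite_borel_measure_axioms.intro
      finite_measure.finite_measure_distr[OF finite_measure_weighted]) auto

lemma tail_eq_cdf:
  assumes [measurable]: "X \<in> borel_measurable M"
  shows "tail X = (\<lambda>x. measure (distr weighted borel X) UNIV - cdf (distr weighted borel X) x)"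
proof
  fix x
  interpret D: finite_borel_measure "distr weighted borel X"
    by (rule finite_borel_measure_distr_weighted) fact
  have "X -` {x<..} \<inter> space weighted = {\<omega> \<in> space M. x < X \<omega>}" by auto
  moreover have "{\<omega> \<in> space M. x < X \<omega>} \<in> sets M" by measurable
  ultimately have "tail X x = measure (distr weighted borel X) {x<..}"
    by (simp add: measure_weighted measure_distr)
  also have "\<dots> = measure (distr weighted borel X) (UNIV - {..x})"
    by (simp add: Compl_eq_Diff_UNIV[symmetric])
  also have "\<dots> = measure (distr weighted borel X) UNIV - cdf (distr weighted borel X) x"
    using D.finite_measure_compl[of "{..x}"] by (simp add: cdf_def)
  finally show "tail X x = measure (distr weighted borel X) UNIV - cdf (distr weighted borel X) x" .
qed

lemma tail_antimono: "X \<in> borel_measurable M \<Longrightarrow> antimono (tail X)"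
  using finite_borel_measure.cdf_nondecreasing[OF finite_borel_measure_distr_weighted]
  by (auto simp: tail_eq_cdf antimono_def)

lemma tail_right_continuous: "X \<in> borel_measurable M \<Longrightarrow> continuous (at_right a) (tail X)"
  using finite_borel_measure.cdf_is_right_cont[OF finite_borel_measure_distr_weighted]
  by (simp add: tail_eq_cdf continuous_diff)

lemma integrable_Y_indicator: "B \<in> sets M \<Longrightarrow> integrable M (\<lambda>\<omega>. Y \<omega> * indicator B \<omega>)"
  by (rule integrable_real_mult_indicator[OF _ Y_integrable])

lemma measure_le_Y_integral:
  assumes "Q \<in> Pset M Y" and [measurable]: "B \<in> sets M"
  shows "measure Q B \<le> integral\<^sup>L M (\<lambda>\<omega>. Y \<omega> * indicator B \<omega>)"
proof -
  from assms(1) obtain g where [measurable]: "g \<in> borel_measurable M"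
    and g: "AE \<omega> in M. 0 \<le> g \<omega> \<and> g \<omega> \<le> Y \<omega>" and Q: "Q = density M (\<lambda>\<omega>. ennreal (g \<omega>))"
    unfolding Pset_def by blast
  have "emeasure Q B = (\<integral>\<^sup>+ \<omega>. ennreal (g \<omega>) * indicator B \<omega> \<partial>M)"
    unfolding Q by (rule emeasure_density) auto
  also have "\<dots> \<le> (\<integral>\<^sup>+ \<omega>. ennreal (Y \<omega>) * indicator B \<omega> \<partial>M)"
    using g by (intro nn_integral_mono_AE, elim eventually_mono) (auto intro: ennreal_leI split: split_indicator)
  also have "\<dots> = emeasure (density M (\<lambda>\<omega>. ennreal (Y \<omega>))) B"
    by (rule emeasure_density[symmetric]) auto
  also have "\<dots> = ennreal (integral\<^sup>L M (\<lambda>\<omega>. Y \<omega> * indicator B \<omega>))"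
    using Y_nonneg Y_integrable by (intro emeasure_density_eq_integral) auto
  finally have "enn2real (emeasure Q B) \<le> enn2real (ennreal (integral\<^sup>L M (\<lambda>\<omega>. Y \<omega> * indicator B \<omega>)))"
    by (rule enn2real_mono) simp
  moreover have "0 \<le> integral\<^sup>L M (\<lambda>\<omega>. Y \<omega> * indicator B \<omega>)"
    using Y_nonneg by (intro integral_nonneg_AE AE_I2) (auto split: split_indicator)
  ultimately show ?thesis by (simp add: measure_def)
qed

lemma density_mem_Pset:
  assumes [measurable]: "g \<in> borel_measurable M" and g: "\<forall>\<omega>\<in>space M. 0 \<le> g \<omega> \<and> g \<omega> \<le> Y \<omega>"
    and "integrable M g" and "expectation g = 1"
  shows "density M (\<lambda>\<omega>. ennreal (g \<omega>)) \<in> Pset M Y"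
proof -
  have "expectation (\<lambda>\<omega>. g \<omega> * indicator (space M) \<omega>) = expectation g"
    by (intro Bochner_Integration.integral_cong) auto
  then have "emeasure (density M (\<lambda>\<omega>. ennreal (g \<omega>))) (space M) = 1"
    using assms by (simp add: emeasure_density_eq_integral)
  then have "prob_space (density M (\<lambda>\<omega>. ennreal (g \<omega>)))"
    by (intro prob_spaceI) simp
  with g show ?thesis
    unfolding Pset_def by (intro CollectI bexI[of _ g]) (auto intro!: AE_I2)
qed

lemma exists_Pset_measure_eq_min:
  assumes S[measurable]: "S \<in> sets M"
  shows "\<exists>Q\<in>Pset M Y. measure Q S = min 1 (integral\<^sup>L M (\<lambda>\<omega>. Y \<omega> * indicator S \<omega>))"
proof -
  define T where "T = space M - S"
  have [measurable]: "T \<in> sets M" unfolding T_def by measurable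
  define a where "a = integral\<^sup>L M (\<lambda>\<omega>. Y \<omega> * indicator S \<omega>)"
  define b where "b = integral\<^sup>L M (\<lambda>\<omega>. Y \<omega> * indicator T \<omega>)"
  have "a + b = expectation (\<lambda>\<omega>. Y \<omega> * indicator S \<omega> + Y \<omega> * indicator T \<omega>)"
    unfolding a_def b_def by (intro Bochner_Integration.integral_add[symmetric] integrable_Y_indicator) auto
  also have "\<dots> = expectation Y"
    by (intro Bochner_Integration.integral_cong) (auto simp: T_def split: split_indicator)
  finally have ab: "1 < a + b" using expectation_Y_gt_1 by simp
  have "0 \<le> a" "0 \<le> b"
    unfolding a_def b_def using Y_nonneg by (auto intro!: integral_nonneg_AE split: split_indicator)
  \<comment> \<open>rescale Y by \<alpha> on S and by \<beta> off S so that Q S = min 1 a and Q has mass 1;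
    \<beta> \<le> 1 is where a + b = expectation Y > 1 is needed\<close>
  define \<alpha> where "\<alpha> = (if 1 \<le> a then 1 / a else 1)"
  define \<beta> where "\<beta> = (if 1 \<le> a then 0 else (1 - a) / b)"
  have \<alpha>: "0 \<le> \<alpha>" "\<alpha> \<le> 1" "\<alpha> * a = min 1 a"
    using \<open>0 \<le> a\<close> by (auto simp: \<alpha>_def)
  have \<beta>: "0 \<le> \<beta>" "\<beta> \<le> 1" "\<alpha> * a + \<beta> * b = 1"
    using ab \<open>0 \<le> a\<close> by (auto simp: \<alpha>_def \<beta>_def)
  define g where "g \<omega> = \<alpha> * (Y \<omega> * indicator S \<omega>) + \<beta> * (Y \<omega> * indicator T \<omega>)" for \<omega>
  have [measurable]: "g \<in> borel_measurable M" unfolding g_def by measurable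
  have g_bounds: "\<forall>\<omega>\<in>space M. 0 \<le> g \<omega> \<and> g \<omega> \<le> Y \<omega>"
    using Y_nonneg \<alpha> \<beta> by (auto simp: g_def T_def mult_left_le_one_le split: split_indicator)
  have g_integrable: "integrable M g"
    unfolding g_def by (intro Bochner_Integration.integrable_add integrable_mult_right integrable_Y_indicator) auto
  have "expectation g = 1"
    using \<beta> unfolding g_def a_def b_def by (simp add: integrable_Y_indicator)
  then have "density M (\<lambda>\<omega>. ennreal (g \<omega>)) \<in> Pset M Y"
    using g_bounds g_integrable by (intro density_mem_Pset) auto
  moreover have "expectation (\<lambda>\<omega>. g \<omega> * indicator S \<omega>) = expectation (\<lambda>\<omega>. \<alpha> * (Y \<omega> * indicator S \<omega>))"
    by (intro Bochner_Integration.integral_cong) (auto simp: g_def T_def split: split_indicator)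
  then have "measure (density M (\<lambda>\<omega>. ennreal (g \<omega>))) S = min 1 a"
    using g_bounds g_integrable \<alpha> by (simp add: measure_density_eq_integral a_def)
  ultimately show ?thesis by (auto simp: a_def)
qed

lemma robustLVaR_eq:
  assumes L: "H_I L" and [measurable]: "Z \<in> borel_measurable M"
  shows "robustLVaR M Y L Z = Inf {ereal x | x. tail Z x \<le> L x}"
proof (rule antisym)
  show "robustLVaR M Y L Z \<le> Inf {ereal x | x. tail Z x \<le> L x}"
    unfolding robustLVaR_def
  proof (rule SUP_least)
    fix Q assume Q: "Q \<in> Pset M Y"
    then have "space Q = space M" by (auto simp: Pset_def)
    show "LVaR L Q Z \<le> Inf {ereal x | x. tail Z x \<le> L x}"
      unfolding LVaR_def
    proof (rule Inf_superset_mono, safe)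
      fix x assume "tail Z x \<le> L x"
      moreover have "measure Q {\<omega> \<in> space M. x < Z \<omega>} \<le> tail Z x"
        by (rule measure_le_Y_integral[OF Q]) measurable
      ultimately show "\<exists>x'. ereal x = ereal x' \<and> measure Q {\<omega> \<in> space Q. x' < Z \<omega>} \<le> L x'"
        using \<open>space Q = space M\<close> by auto
    qed
  qed
next
  show "Inf {ereal x | x. tail Z x \<le> L x} \<le> robustLVaR M Y L Z"
  proof (rule dense_le)
    fix y assume y: "y < Inf {ereal x | x. tail Z x \<le> L x}"
    show "y \<le> robustLVaR M Y L Z"
    proof (cases y)
      case (real x)
      have "\<not> tail Z x \<le> L x"
      proof
        assume "tail Z x \<le> L x"
        then have "Inf {ereal x | x. tail Z x \<le> L x} \<le> ereal x" by (intro Inf_lower) auto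
        with y real show False by simp
      qed
      moreover have "L x < 1" using L by (simp add: H_I_def)
      moreover obtain Q where Q: "Q \<in> Pset M Y" and "measure Q {\<omega> \<in> space M. x < Z \<omega>} = min 1 (tail Z x)"
        using exists_Pset_measure_eq_min[of "{\<omega> \<in> space M. x < Z \<omega>}"] by auto
      moreover obtain g where "Q = density M (\<lambda>\<omega>. ennreal (g \<omega>))" "prob_space Q"
        using Q by (auto simp: Pset_def)
      moreover have "mono L" using L by (simp add: H_I_def)
      ultimately have "ereal x \<le> LVaR L Q Z"
        by (intro LVaR_ge prob_space.axioms(1)) auto
      also have "\<dots> \<le> robustLVaR M Y L Z"
        unfolding robustLVaR_def using Q by (rule SUP_upper)
      finally show ?thesis using real by simp
    qed (use y in auto)
  qed
qed

lemma robustLVaR_shifted_indicator_le: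
  assumes "H_I \<Lambda>" and [measurable]: "X \<in> borel_measurable M" "A \<in> sets M"
    and "integral\<^sup>L M (\<lambda>\<omega>. Y \<omega> * indicator ({\<omega> \<in> space M. x < X \<omega>} \<inter> A) \<omega>) \<le> \<Lambda> y"
  shows "robustLVaR M Y \<Lambda> (\<lambda>\<omega>. (X \<omega> - x) * indicator A \<omega> + y) \<le> ereal y"
proof -
  have "{\<omega> \<in> space M. y < (X \<omega> - x) * indicator A \<omega> + y} = {\<omega> \<in> space M. x < X \<omega>} \<inter> A"
    by (auto split: split_indicator)
  with assms show ?thesis
    by (subst robustLVaR_eq) (auto intro!: Inf_lower)
qed

end

locale robust_risk_sharing = bounded_density_family M Y for M :: "'a measure" and Y +
  fixes XX :: "('a \<Rightarrow> real) set" and L :: "nat \<Rightarrow> real \<Rightarrow> real" and n :: nat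
  assumes atomless: "atomless M" and n_pos: "n \<ge> 1"
    and L_H_I: "\<forall>i<n. H_I (L i)"
    and XX_measurable: "XX \<subseteq> borel_measurable M"
    and XX_const: "\<forall>c::real. (\<lambda>_. c) \<in> XX"
    and XX_add_diff: "\<forall>X\<in>XX. \<forall>Z\<in>XX. (\<lambda>\<omega>. X \<omega> + Z \<omega>) \<in> XX \<and> (\<lambda>\<omega>. X \<omega> - Z \<omega>) \<in> XX"
    and XX_mult_indicator: "\<forall>X\<in>XX. \<forall>A\<in>sets M. (\<lambda>\<omega>. X \<omega> * indicator A \<omega>) \<in> XX"
    and attainable: "attainable n L"
begin

lemma shifted_indicator_mem:
  assumes "X \<in> XX" "A \<in> sets M"
  shows "(\<lambda>\<omega>. (X \<omega> - x) * indicator A \<omega> + y) \<in> XX"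
proof -
  have "(\<lambda>\<omega>. X \<omega> - x) \<in> XX"
    using bspec[OF bspec[OF XX_add_diff assms(1)] XX_const[rule_format, of x]] by simp
  then have "(\<lambda>\<omega>. (X \<omega> - x) * indicator A \<omega>) \<in> XX"
    by (rule bspec[OF bspec[OF XX_mult_indicator] assms(2)])
  then show ?thesis
    using bspec[OF bspec[OF XX_add_diff] XX_const[rule_format, of y]] by simp
qed

lemma Inf_tail_le_sum_robustLVaR:
  assumes Z: "\<forall>i<n. Z i \<in> borel_measurable M" and [measurable]: "X \<in> borel_measurable M"
    and sum_Z: "\<forall>\<omega>\<in>space M. (\<Sum>i<n. Z i \<omega>) = X \<omega>"
  shows "Inf {ereal x | x. tail X x \<le> Lbar n L x} \<le> (\<Sum>i<n. robustLVaR M Y (L i) (Z i))"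
proof -
  interpret weighted: finite_measure weighted by (rule finite_measure_weighted)
  have "Inf {ereal x | x. tail X x \<le> Lbar n L x} \<le> ereal (\<Sum>i<n. y i)"
    if y: "\<forall>i<n. tail (Z i) (y i) \<le> L i (y i)" for y
  proof -
    define s where "s = (\<Sum>i<n. y i)"
    define B where "B i = {\<omega> \<in> space M. y i < Z i \<omega>}" for i
    have B: "B i \<in> sets M" if "i < n" for i
    proof -
      have [measurable]: "Z i \<in> borel_measurable M" using Z that by blast
      show ?thesis unfolding B_def by measurable
    qed
    have "{\<omega> \<in> space M. s < X \<omega>} \<subseteq> (\<Union>i<n. B i)"
    proof safe
      fix \<omega> assume \<omega>: "\<omega> \<in> space M" "s < X \<omega>"
      then have "\<not> (\<forall>i<n. Z i \<omega> \<le> y i)"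
        using sum_Z sum_mono[of "{..<n}" "\<lambda>i. Z i \<omega>" y] by (force simp: s_def)
      then show "\<omega> \<in> (\<Union>i<n. B i)"
        using \<omega>(1) by (auto simp: B_def not_le)
    qed
    then have "tail X s \<le> measure weighted (\<Union>i<n. B i)"
      using B by (auto simp: measure_weighted[symmetric] intro!: weighted.finite_measure_mono)
    also have "\<dots> \<le> (\<Sum>i<n. measure weighted (B i))"
      using B by (intro weighted.finite_measure_subadditive_finite) auto
    also have "\<dots> = (\<Sum>i<n. tail (Z i) (y i))"
      using B by (intro sum.cong) (auto simp: measure_weighted B_def)
    also have "\<dots> \<le> (\<Sum>i<n. L i (y i))"
      using y by (intro sum_mono) auto
    also have "\<dots> \<le> Lbar n L s"
      using Lbar_upper[OF L_H_I] s_def by blast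
    finally show ?thesis
      unfolding s_def by (intro Inf_lower) auto
  qed
  moreover have "(\<Sum>i<n. robustLVaR M Y (L i) (Z i)) = (\<Sum>i<n. Inf {ereal y | y. tail (Z i) y \<le> L i y})"
    using L_H_I Z by (intro sum.cong refl robustLVaR_eq) auto
  ultimately show ?thesis by (simp add: ereal_le_sum_Inf)
qed

lemma exists_tail_partition:
  assumes [measurable]: "X \<in> borel_measurable M" and t: "\<forall>i<n. 0 \<le> t i"
    and tail_le: "tail X x \<le> (\<Sum>i<n. t i)"
  obtains A where "\<forall>i<n. A i \<in> sets M" "disjoint_family_on A {..<n}" "(\<Union>i<n. A i) = space M"
    "\<forall>i<n. integral\<^sup>L M (\<lambda>\<omega>. Y \<omega> * indicator ({\<omega> \<in> space M. x < X \<omega>} \<inter> A i) \<omega>) \<le> t i"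
proof -
  interpret weighted: finite_measure weighted by (rule finite_measure_weighted)
  define S where "S = {\<omega> \<in> space M. x < X \<omega>}"
  have S: "S \<in> sets M" unfolding S_def by measurable
  then have "measure weighted S \<le> (\<Sum>i<n. t i)"
    using tail_le by (simp add: measure_weighted S_def)
  then obtain A where A: "\<forall>i<n. A i \<in> sets M \<and> A i \<subseteq> S \<and> measure weighted (A i) \<le> t i"
      "disjoint_family_on A {..<n}" "(\<Union>i<n. A i) = S"
    using weighted.atomless_partition[OF atomless_weighted[OF atomless], of n S t] n_pos S t by auto
  \<comment> \<open>space M - S does not meet S, so adding it to a piece keeps that piece's bound\<close>
  define A' where "A' i = A i \<union> (if i = 0 then space M - S else {})" for i
  show thesis
  proof (rule that[of A'])
    show "\<forall>i<n. A' i \<in> sets M" using A(1) S by (auto simp: A'_def)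
    have "S \<inter> A' i = A i" if "i < n" for i
      using A(1) that by (auto simp: A'_def)
    then show "\<forall>i<n. integral\<^sup>L M (\<lambda>\<omega>. Y \<omega> * indicator ({\<omega> \<in> space M. x < X \<omega>} \<inter> A' i) \<omega>) \<le> t i"
      using A(1) by (simp add: S_def[symmetric] measure_weighted[symmetric])
    show "disjoint_family_on A' {..<n}"
      using A(1) by (intro disjoint_family_on_bisimulation[OF A(2)]) (auto simp: A'_def)
    have "(\<Union>i<n. if i = 0 then space M - S else {}) = space M - S"
      using n_pos by (auto intro!: bexI[of _ 0])
    then have "(\<Union>i<n. A' i) = (\<Union>i<n. A i) \<union> (space M - S)"
      by (simp add: A'_def UN_Un_distrib)
    then show "(\<Union>i<n. A' i) = space M"
      using A(3) by (auto simp: S_def)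
  qed
qed

lemma exists_attaining_partition:
  assumes "X \<in> borel_measurable M" and "tail X x \<le> Lbar n L x"
  obtains ys A where "(\<Sum>i<n. ys i) = x" "(\<Sum>i<n. L i (ys i)) = Lbar n L x"
    "\<forall>i<n. A i \<in> sets M" "disjoint_family_on A {..<n}" "(\<Union>i<n. A i) = space M"
    "\<forall>i<n. integral\<^sup>L M (\<lambda>\<omega>. Y \<omega> * indicator ({\<omega> \<in> space M. x < X \<omega>} \<inter> A i) \<omega>) \<le> L i (ys i)"
proof -
  obtain ys where ys: "(\<Sum>i<n. ys i) = x" "(\<Sum>i<n. L i (ys i)) = Lbar n L x"
    using attainable unfolding attainable_def by blast
  have "\<forall>i<n. 0 \<le> L i (ys i)"
    using L_H_I by (auto simp: H_I_def less_imp_le)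
  with ys(2) assms obtain A where "\<forall>i<n. A i \<in> sets M" "disjoint_family_on A {..<n}" "(\<Union>i<n. A i) = space M"
    "\<forall>i<n. integral\<^sup>L M (\<lambda>\<omega>. Y \<omega> * indicator ({\<omega> \<in> space M. x < X \<omega>} \<inter> A i) \<omega>) \<le> L i (ys i)"
    by (elim exists_tail_partition) auto
  with ys show thesis by (rule that)
qed

lemma allocation_feasible:
  assumes "X \<in> XX" and "(\<Sum>i<n. ys i) = x"
    and "\<forall>i<n. A i \<in> sets M" "disjoint_family_on A {..<n}" "(\<Union>i<n. A i) = space M"
  shows "(\<forall>i<n. (\<lambda>\<omega>. (X \<omega> - x) * indicator (A i) \<omega> + ys i) \<in> XX)
    \<and> (\<forall>\<omega>\<in>space M. (\<Sum>i<n. (X \<omega> - x) * indicator (A i) \<omega> + ys i) = X \<omega>)"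
  using assms shifted_indicator_mem sum_shifted_indicator_partition[of A n _ ys x X] by auto

lemma sum_robustLVaR_allocation_le:
  assumes "X \<in> borel_measurable M" and "(\<Sum>i<n. ys i) = x" and "\<forall>i<n. A i \<in> sets M"
    and "\<forall>i<n. integral\<^sup>L M (\<lambda>\<omega>. Y \<omega> * indicator ({\<omega> \<in> space M. x < X \<omega>} \<inter> A i) \<omega>) \<le> L i (ys i)"
  shows "(\<Sum>i<n. robustLVaR M Y (L i) (\<lambda>\<omega>. (X \<omega> - x) * indicator (A i) \<omega> + ys i)) \<le> ereal x"
proof -
  have "(\<Sum>i<n. robustLVaR M Y (L i) (\<lambda>\<omega>. (X \<omega> - x) * indicator (A i) \<omega> + ys i)) \<le> (\<Sum>i<n. ereal (ys i))"
    using assms L_H_I by (intro sum_mono robustLVaR_shifted_indicator_le) auto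
  then show ?thesis using assms(2) by simp
qed

lemma infconv_le_sum:
  assumes "\<forall>i<n. Z i \<in> XX" "\<forall>\<omega>\<in>space M. (\<Sum>i<n. Z i \<omega>) = X \<omega>"
  shows "infconv M XX n (\<lambda>i. robustLVaR M Y (L i)) X \<le> (\<Sum>i<n. robustLVaR M Y (L i) (Z i))"
  unfolding infconv_def using assms by (intro Inf_lower) auto

lemma infconv_robustLVaR_eq:
  assumes "X \<in> XX"
  shows "infconv M XX n (\<lambda>i. robustLVaR M Y (L i)) X = Inf {ereal x | x. tail X x \<le> Lbar n L x}"
proof (rule antisym)
  have X[measurable]: "X \<in> borel_measurable M" using assms XX_measurable by blast
  show "infconv M XX n (\<lambda>i. robustLVaR M Y (L i)) X \<le> Inf {ereal x | x. tail X x \<le> Lbar n L x}"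
  proof (rule Inf_greatest, safe)
    fix x assume "tail X x \<le> Lbar n L x"
    with X obtain ys A where ys: "(\<Sum>i<n. ys i) = x" and A: "\<forall>i<n. A i \<in> sets M"
        "disjoint_family_on A {..<n}" "(\<Union>i<n. A i) = space M"
        "\<forall>i<n. integral\<^sup>L M (\<lambda>\<omega>. Y \<omega> * indicator ({\<omega> \<in> space M. x < X \<omega>} \<inter> A i) \<omega>) \<le> L i (ys i)"
      by (elim exists_attaining_partition)
    have "infconv M XX n (\<lambda>i. robustLVaR M Y (L i)) X
        \<le> (\<Sum>i<n. robustLVaR M Y (L i) (\<lambda>\<omega>. (X \<omega> - x) * indicator (A i) \<omega> + ys i))"
      using allocation_feasible[OF assms ys A(1-3)] by (intro infconv_le_sum) auto
    also have "\<dots> \<le> ereal x"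
      using sum_robustLVaR_allocation_le[OF X ys A(1,4)] .
    finally show "infconv M XX n (\<lambda>i. robustLVaR M Y (L i)) X \<le> ereal x" .
  qed
  show "Inf {ereal x | x. tail X x \<le> Lbar n L x} \<le> infconv M XX n (\<lambda>i. robustLVaR M Y (L i)) X"
    unfolding infconv_def using XX_measurable
    by (intro Inf_greatest) (auto intro!: Inf_tail_le_sum_robustLVaR)
qed

lemma tail_le_Lbar_at_Inf:
  assumes "X \<in> borel_measurable M"
    and "Inf {ereal x | x. tail X x \<le> Lbar n L x} = ereal x\<^sub>0"
    and "continuous (at_right x\<^sub>0) (Lbar n L)"
  shows "tail X x\<^sub>0 \<le> Lbar n L x\<^sub>0"
proof (rule le_at_Inf_right_continuous[of "tail X" "Lbar n L"])
  show "mono (Lbar n L)"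
    using Lbar_mono[OF L_H_I] n_pos by (intro monoI) auto
qed (use assms tail_antimono tail_right_continuous in auto)

lemma allocation_attains_infconv:
  assumes "X \<in> XX" and "infconv M XX n (\<lambda>i. robustLVaR M Y (L i)) X = ereal x"
    and "(\<Sum>i<n. ys i) = x"
    and "\<forall>i<n. A i \<in> sets M" "disjoint_family_on A {..<n}" "(\<Union>i<n. A i) = space M"
    and "\<forall>i<n. integral\<^sup>L M (\<lambda>\<omega>. Y \<omega> * indicator ({\<omega> \<in> space M. x < X \<omega>} \<inter> A i) \<omega>) \<le> L i (ys i)"
  shows "(\<Sum>i<n. robustLVaR M Y (L i) (\<lambda>\<omega>. (X \<omega> - x) * indicator (A i) \<omega> + ys i))
           = infconv M XX n (\<lambda>i. robustLVaR M Y (L i)) X"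
proof (rule antisym)
  have "X \<in> borel_measurable M" using assms(1) XX_measurable by blast
  then show "(\<Sum>i<n. robustLVaR M Y (L i) (\<lambda>\<omega>. (X \<omega> - x) * indicator (A i) \<omega> + ys i))
      \<le> infconv M XX n (\<lambda>i. robustLVaR M Y (L i)) X"
    using sum_robustLVaR_allocation_le assms(2-4,7) by simp
  show "infconv M XX n (\<lambda>i. robustLVaR M Y (L i)) X
      \<le> (\<Sum>i<n. robustLVaR M Y (L i) (\<lambda>\<omega>. (X \<omega> - x) * indicator (A i) \<omega> + ys i))"
    using allocation_feasible[OF assms(1,3-6)] by (intro infconv_le_sum) auto
qed

end

theorem mainTheorem16:
  fixes M :: "'a measure" and XX :: "('a \<Rightarrow> real) set"
    and L :: "nat \<Rightarrow> real \<Rightarrow> real" and n :: nat and Y :: "'a \<Rightarrow> real"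
  assumes "prob_space M" and "atomless M" and "n \<ge> 1"
    and "\<forall>i<n. H_I (L i)"
    and "Y \<in> borel_measurable M" and "\<forall>\<omega>\<in>space M. 0 \<le> Y \<omega>"
    and "integrable M Y" and "1 < integral\<^sup>L M Y"
    and "XX \<subseteq> borel_measurable M"
    and "\<forall>c::real. (\<lambda>_. c) \<in> XX"
    and "\<forall>X\<in>XX. \<forall>Z\<in>XX. (\<lambda>\<omega>. X \<omega> + Z \<omega>) \<in> XX \<and> (\<lambda>\<omega>. X \<omega> - Z \<omega>) \<in> XX"
    and "\<forall>X\<in>XX. \<forall>A\<in>sets M. (\<lambda>\<omega>. X \<omega> * indicator A \<omega>) \<in> XX"
    and "attainable n L"
  shows "(\<forall>X\<in>XX. infconv M XX n (\<lambda>i. robustLVaR M Y (L i)) X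
           = Inf {ereal x | x. integral\<^sup>L M (\<lambda>\<omega>. Y \<omega> * indicator {\<omega>\<in>space M. X \<omega> > x} \<omega>)
                                 \<le> Lbar n L x})
    \<and> (\<forall>X\<in>XX. \<forall>xs::real.
           Inf {ereal x | x. integral\<^sup>L M (\<lambda>\<omega>. Y \<omega> * indicator {\<omega>\<in>space M. X \<omega> > x} \<omega>)
                                 \<le> Lbar n L x} = ereal xs
           \<and> continuous (at_right xs) (Lbar n L)
         \<longrightarrow> (\<exists>ys A. (\<Sum>i<n. ys i) = xs \<and> (\<Sum>i<n. L i (ys i)) = Lbar n L xs
                    \<and> (\<forall>i<n. A i \<in> sets M) \<and> disjoint_family_on A {..<n}
                    \<and> (\<Union>i<n. A i) = space M
                    \<and> (\<forall>i<n. integral\<^sup>L M (\<lambda>\<omega>. Y \<omega> * indicator ({\<omega>\<in>space M. X \<omega> > xs} \<inter> A i) \<omega>)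
                              \<le> L i (ys i)))
           \<and> (\<forall>ys A. (\<Sum>i<n. ys i) = xs \<and> (\<Sum>i<n. L i (ys i)) = Lbar n L xs
                    \<and> (\<forall>i<n. A i \<in> sets M) \<and> disjoint_family_on A {..<n}
                    \<and> (\<Union>i<n. A i) = space M
                    \<and> (\<forall>i<n. integral\<^sup>L M (\<lambda>\<omega>. Y \<omega> * indicator ({\<omega>\<in>space M. X \<omega> > xs} \<inter> A i) \<omega>)
                              \<le> L i (ys i))
                \<longrightarrow> (let Z = (\<lambda>i \<omega>. (X \<omega> - xs) * indicator (A i) \<omega> + ys i) in
                      (\<forall>i<n. Z i \<in> XX) \<and> (\<forall>\<omega>\<in>space M. (\<Sum>i<n. Z i \<omega>) = X \<omega>)
                      \<and> (\<Sum>i<n. robustLVaR M Y (L i) (Z i))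
                          = infconv M XX n (\<lambda>i. robustLVaR M Y (L i)) X)))"
proof -
  interpret robust_risk_sharing M Y XX L n
    using assms by (simp add: robust_risk_sharing_def robust_risk_sharing_axioms_def
        bounded_density_family_def bounded_density_family_axioms_def)
  have measurable: "X \<in> borel_measurable M" if "X \<in> XX" for X
    using that XX_measurable by blast
  show ?thesis
    unfolding Let_def
    apply (intro conjI ballI allI impI; (elim conjE)?)
    subgoal by (rule infconv_robustLVaR_eq)
    subgoal
      by (rule exists_attaining_partition[OF measurable tail_le_Lbar_at_Inf[OF measurable]]) blast+
    subgoal using allocation_feasible by blast
    subgoal using allocation_feasible by blast
    subgoal using allocation_attains_infconv infconv_robustLVaR_eq by simp
    done
qed

end
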